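(* Let $M$ be a connected matroid and let $N$ be a minor of $M$. If $N$ has $l$ elements that are either a loop or a coloop, then $M$ has a minor $N'$ such that $N$ is a minor of $N'$, $N'$ has no loops and no coloops, and $|E(N')|\leq|E(N)|+l$.
   Context: Minors are taken with labelled ground sets: $N$ is a minor of $M$ if $N=M/C\setminus D$ for some disjoint $C,D\subseteq E(M)$. *)

theory Defs
  imports Main
begin

text \<open>A (finite) matroid is represented by its ground set together with its
independence predicate. Everything outside the ground set is dependent.\<close>

type_synonym 'a matroid = "'a set \<times> ('a set \<Rightarrow> bool)"

definition gnd :: "'a matroid \<Rightarrow> 'a set" where
  "gnd M = fst M"

definition indep :: "'a matroid \<Rightarrow> 'a set \<Rightarrow> bool" where
  "indep M = snd M"

definition matroid :: "'a matroid \<Rightarrow> bool" where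
  "matroid M \<longleftrightarrow>
     finite (gnd M) \<and>
     indep M {} \<and>
     (\<forall>I. indep M I \<longrightarrow> I \<subseteq> gnd M) \<and>
     (\<forall>I J. indep M J \<and> I \<subseteq> J \<longrightarrow> indep M I) \<and>
     (\<forall>I J. indep M I \<and> indep M J \<and> card I < card J \<longrightarrow>
        (\<exists>e \<in> J - I. indep M (insert e I)))"

definition rank :: "'a matroid \<Rightarrow> 'a set \<Rightarrow> nat" where
  "rank M X = Max {card I | I. I \<subseteq> X \<and> indep M I}"

definition basis :: "'a matroid \<Rightarrow> 'a set \<Rightarrow> bool" where
  "basis M B \<longleftrightarrow> indep M B \<and> (\<forall>B'. indep M B' \<and> B \<subseteq> B' \<longrightarrow> B' = B)"

definition circuit :: "'a matroid \<Rightarrow> 'a set \<Rightarrow> bool" where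
  "circuit M C \<longleftrightarrow> C \<subseteq> gnd M \<and> \<not> indep M C \<and> (\<forall>D. D \<subset> C \<longrightarrow> indep M D)"

definition loop :: "'a matroid \<Rightarrow> 'a \<Rightarrow> bool" where
  "loop M e \<longleftrightarrow> e \<in> gnd M \<and> \<not> indep M {e}"

definition coloop :: "'a matroid \<Rightarrow> 'a \<Rightarrow> bool" where
  "coloop M e \<longleftrightarrow> e \<in> gnd M \<and> (\<forall>B. basis M B \<longrightarrow> e \<in> B)"

definition connected_matroid :: "'a matroid \<Rightarrow> bool" where
  "connected_matroid M \<longleftrightarrow>
     (\<forall>e \<in> gnd M. \<forall>f \<in> gnd M. e \<noteq> f \<longrightarrow> (\<exists>C. circuit M C \<and> e \<in> C \<and> f \<in> C))"

definition delete :: "'a matroid \<Rightarrow> 'a set \<Rightarrow> 'a matroid" where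
  "delete M D = (gnd M - D, \<lambda>I. indep M I \<and> I \<subseteq> gnd M - D)"

definition contract :: "'a matroid \<Rightarrow> 'a set \<Rightarrow> 'a matroid" where
  "contract M C = (gnd M - C,
     \<lambda>I. I \<subseteq> gnd M - C \<and> rank M (I \<union> C) = card I + rank M C)"

text \<open>Minors with labelled ground sets: N = M/C\D with C, D disjoint subsets of E(M).\<close>
definition minor :: "'a matroid \<Rightarrow> 'a matroid \<Rightarrow> bool" where
  "minor N M \<longleftrightarrow> (\<exists>C D. C \<subseteq> gnd M \<and> D \<subseteq> gnd M \<and> C \<inter> D = {} \<and>
                         N = delete (contract M C) D)"

end

theory Submission imports Defs begin

(* Every minor can be written as N = M/C\D with C independent and D coindependent, i.e.
   rank (E - D) = rank E. If e is a loop of N, it is spanned by C; exchanging e against an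
   element x of its fundamental circuit in C, the minor M/(C - {x})\D no longer has e as a loop,
   and since (C - {x}) + e spans x it gains no new loop or coloop. Dually, a coloop e of N that is
   not a loop disappears when we stop deleting an element x of D that restores the full rank of
   E - D - e. Both exchanges need M to have no loops and no coloops, which holds because M is
   connected with at least two elements. Every step removes an element from the set of loops and
   coloops at the cost of one extra element, so after at most l steps we reach N'. *)

section \<open>Independence and rank\<close>

lemma matroid_finite_gnd: "matroid M \<Longrightarrow> finite (gnd M)"
  by (simp add: matroid_def)

lemma indep_empty: "matroid M \<Longrightarrow> indep M {}"
  by (simp add: matroid_def)

lemma indep_subset_gnd: "matroid M \<Longrightarrow> indep M I \<Longrightarrow> I \<subseteq> gnd M"
  by (simp add: matroid_def)

lemma indep_subset: "matroid M \<Longrightarrow> indep M J \<Longrightarrow> I \<subseteq> J \<Longrightarrow> indep M I"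
  unfolding matroid_def by blast

lemma indep_augment:
  "matroid M \<Longrightarrow> indep M I \<Longrightarrow> indep M J \<Longrightarrow> card I < card J \<Longrightarrow> \<exists>e\<in>J - I. indep M (insert e I)"
  unfolding matroid_def by blast

lemma indep_finite: "matroid M \<Longrightarrow> indep M I \<Longrightarrow> finite I"
  by (meson finite_subset matroid_finite_gnd indep_subset_gnd)

lemma finite_rank_values:
  assumes "matroid M" shows "finite {card I | I. I \<subseteq> X \<and> indep M I}"
proof (rule finite_subset)
  show "{card I | I. I \<subseteq> X \<and> indep M I} \<subseteq> card ` Pow (gnd M)"
    using indep_subset_gnd[OF assms] by blast
qed (use matroid_finite_gnd[OF assms] in simp)

lemma rank_ge_card: "matroid M \<Longrightarrow> indep M I \<Longrightarrow> I \<subseteq> X \<Longrightarrow> card I \<le> rank M X"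
  unfolding rank_def by (rule Max_ge[OF finite_rank_values]) auto

lemma obtain_rank_witness:
  assumes "matroid M" obtains I where "I \<subseteq> X" "indep M I" "card I = rank M X"
proof -
  have "rank M X \<in> {card I | I. I \<subseteq> X \<and> indep M I}"
    unfolding rank_def using indep_empty[OF assms]
    by (intro Max_in[OF finite_rank_values[OF assms]]) auto
  then show thesis using that by auto
qed

lemma rank_le_card: assumes "matroid M" "finite X" shows "rank M X \<le> card X"
proof -
  obtain I where "I \<subseteq> X" "indep M I" "card I = rank M X" using obtain_rank_witness[OF assms(1)] .
  then show ?thesis using card_mono[OF assms(2), of I] by simp
qed

lemma rank_mono: assumes "matroid M" "X \<subseteq> Y" shows "rank M X \<le> rank M Y"
proof -
  obtain I where "I \<subseteq> X" "indep M I" "card I = rank M X" using obtain_rank_witness[OF assms(1)] .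
  then show ?thesis using rank_ge_card[OF assms(1), of I Y] assms(2) by simp
qed

lemma rank_le_rank_gnd: assumes "matroid M" shows "rank M X \<le> rank M (gnd M)"
proof -
  obtain I where I: "indep M I" "card I = rank M X" using obtain_rank_witness[OF assms] by metis
  then show ?thesis using rank_ge_card[OF assms I(1) indep_subset_gnd[OF assms I(1)]] by simp
qed

lemma rank_indep: assumes "matroid M" "indep M I" shows "rank M I = card I"
  using rank_ge_card[OF assms order_refl] rank_le_card[OF assms(1) indep_finite[OF assms]] by simp

lemma rank_empty: "matroid M \<Longrightarrow> rank M {} = 0"
  using rank_indep[OF _ indep_empty] by simp

lemma indep_if_rank_eq_card:
  assumes "matroid M" "finite X" "rank M X = card X" shows "indep M X"
proof -
  obtain I where I: "I \<subseteq> X" "indep M I" "card I = rank M X"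
    using obtain_rank_witness[OF assms(1)] .
  then have "I = X" using card_subset_eq[OF assms(2) I(1)] by (simp add: assms(3))
  with I(2) show ?thesis by simp
qed

lemma indep_extend_to_rank:
  assumes "matroid M" "indep M I" "I \<subseteq> X"
  obtains J where "I \<subseteq> J" "J \<subseteq> X" "indep M J" "card J = rank M X"
proof -
  have "\<exists>J. I \<subseteq> J \<and> J \<subseteq> X \<and> indep M J \<and> card J = rank M X"
    using assms(2,3)
  proof (induction "rank M X - card I" arbitrary: I rule: less_induct)
    case less
    show ?case
    proof (cases "card I < rank M X")
      case True
      obtain J where J: "J \<subseteq> X" "indep M J" "card J = rank M X"
        using obtain_rank_witness[OF assms(1)] .
      then obtain e where e: "e \<in> J - I" "indep M (insert e I)"
        using indep_augment[OF assms(1) less.prems(1) J(2)] True by auto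
      have "rank M X - card (insert e I) < rank M X - card I"
        using e(1) True indep_finite[OF assms(1) less.prems(1)] by simp
      moreover have "insert e I \<subseteq> X" using e(1) J(1) less.prems(2) by blast
      ultimately obtain J' where "insert e I \<subseteq> J'" "J' \<subseteq> X" "indep M J'" "card J' = rank M X"
        using less.hyps[OF _ e(2)] by blast
      then show ?thesis by blast
    next
      case False
      then show ?thesis using less.prems rank_ge_card[OF assms(1), of I X] by auto
    qed
  qed
  then show thesis using that by blast
qed

lemma rank_submodular:
  assumes "matroid M" shows "rank M (X \<union> Y) + rank M (X \<inter> Y) \<le> rank M X + rank M Y"
proof -
  obtain I where I: "I \<subseteq> X \<inter> Y" "indep M I" "card I = rank M (X \<inter> Y)"
    using obtain_rank_witness[OF assms] .
  have "I \<subseteq> X \<union> Y" using I(1) by blast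
  then obtain J where J: "I \<subseteq> J" "J \<subseteq> X \<union> Y" "indep M J" "card J = rank M (X \<union> Y)"
    by (rule indep_extend_to_rank[OF assms I(2)])
  have fJ: "finite J" using indep_finite[OF assms J(3)] .
  have "card (J \<inter> X) \<le> rank M X"
    by (rule rank_ge_card[OF assms indep_subset[OF assms J(3)]]) auto
  moreover have "card (J \<inter> Y) \<le> rank M Y"
    by (rule rank_ge_card[OF assms indep_subset[OF assms J(3)]]) auto
  moreover have "card (J \<inter> X) + card (J \<inter> Y) = card J + card (J \<inter> X \<inter> Y)"
  proof -
    have "(J \<inter> X) \<union> (J \<inter> Y) = J" "(J \<inter> X) \<inter> (J \<inter> Y) = J \<inter> X \<inter> Y"
      using J(2) by blast+
    moreover have "card (J \<inter> X) + card (J \<inter> Y) = card ((J \<inter> X) \<union> (J \<inter> Y)) + card ((J \<inter> X) \<inter> (J \<inter> Y))"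
      using fJ by (intro card_Un_Int) auto
    ultimately show ?thesis by simp
  qed
  moreover have "card I \<le> card (J \<inter> X \<inter> Y)"
    using I(1) J(1) fJ by (intro card_mono) auto
  ultimately show ?thesis using I(3) J(4) by linarith
qed

lemma rank_insert_le: assumes "matroid M" shows "rank M (insert e X) \<le> rank M X + 1"
proof -
  obtain I where I: "I \<subseteq> insert e X" "indep M I" "card I = rank M (insert e X)"
    using obtain_rank_witness[OF assms] .
  have "card (I - {e}) \<le> rank M X"
    using I by (intro rank_ge_card[OF assms indep_subset[OF assms I(2)]]) auto
  moreover have "card I \<le> card (I - {e}) + 1"
    using indep_finite[OF assms I(2)] by (cases "e \<in> I") (auto simp: card_gt_0_iff)
  ultimately show ?thesis using I(3) by linarith
qed

lemma rank_Un_le: assumes "matroid M" "finite Z" shows "rank M (X \<union> Z) \<le> rank M X + card Z"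
  using assms(2)
proof (induction Z rule: finite_induct)
  case (insert z Z)
  then show ?case using rank_insert_le[OF assms(1), of z "X \<union> Z"] by simp
qed simp

lemma rank_insert_eq_mono:
  assumes "matroid M" "rank M (insert x A) = rank M A" "A \<subseteq> B"
  shows "rank M (insert x B) = rank M B"
proof (cases "x \<in> B")
  case False
  have "insert x A \<union> B = insert x B" "insert x A \<inter> B = A" using False assms(3) by auto
  then have "rank M (insert x B) + rank M A \<le> rank M (insert x A) + rank M B"
    using rank_submodular[OF assms(1), of "insert x A" B] by simp
  moreover have "rank M B \<le> rank M (insert x B)" by (rule rank_mono[OF assms(1)]) auto
  ultimately show ?thesis using assms(2) by linarith
qed (simp add: insert_absorb)

lemma rank_Diff_eq_mono:
  assumes "matroid M" "x \<in> A" "A \<subseteq> B" "rank M (A - {x}) = rank M A"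
  shows "rank M (B - {x}) = rank M B"
proof -
  have "rank M (insert x (A - {x})) = rank M (A - {x})" using assms(2,4) by (simp add: insert_absorb)
  then have "rank M (insert x (B - {x})) = rank M (B - {x})"
    by (rule rank_insert_eq_mono[OF assms(1)]) (use assms(3) in blast)
  moreover have "insert x (B - {x}) = B" using assms(2,3) by blast
  ultimately show ?thesis by simp
qed

lemma rank_Un_eq_if_spanned:
  assumes "matroid M" "finite Z" "\<forall>z\<in>Z. rank M (insert z X) = rank M X"
  shows "rank M (X \<union> Z) = rank M X"
  using assms(2,3)
proof (induction Z rule: finite_induct)
  case (insert z Z)
  have "rank M (insert z (X \<union> Z)) = rank M (X \<union> Z)"
    by (rule rank_insert_eq_mono[OF assms(1), of z X]) (use insert.prems in auto)
  with insert show ?case by simp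
qed simp

lemma basis_iff_card_rank:
  assumes "matroid M" shows "basis M B \<longleftrightarrow> indep M B \<and> card B = rank M (gnd M)"
proof
  assume B: "basis M B"
  then have iB: "indep M B" by (simp add: basis_def)
  obtain J where J: "B \<subseteq> J" "J \<subseteq> gnd M" "indep M J" "card J = rank M (gnd M)"
    using indep_extend_to_rank[OF assms iB indep_subset_gnd[OF assms iB]] .
  then have "J = B" using B unfolding basis_def by blast
  with J show "indep M B \<and> card B = rank M (gnd M)" by simp
next
  assume B: "indep M B \<and> card B = rank M (gnd M)"
  have "B' = B" if "indep M B'" "B \<subseteq> B'" for B'
  proof -
    have fin: "finite B'" using indep_finite[OF assms that(1)] .
    have "card B' \<le> card B"
      using rank_ge_card[OF assms that(1) indep_subset_gnd[OF assms that(1)]] B by simp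
    then have "card B = card B'" using card_mono[OF fin that(2)] by linarith
    then show ?thesis using card_subset_eq[OF fin that(2)] by simp
  qed
  with B show "basis M B" unfolding basis_def by blast
qed

lemma coloop_iff_rank:
  assumes "matroid M"
  shows "coloop M e \<longleftrightarrow> e \<in> gnd M \<and> rank M (gnd M - {e}) < rank M (gnd M)"
proof
  assume e: "coloop M e"
  obtain I where I: "I \<subseteq> gnd M - {e}" "indep M I" "card I = rank M (gnd M - {e})"
    using obtain_rank_witness[OF assms] .
  have "\<not> basis M I" using e I(1) unfolding coloop_def by blast
  then have "rank M (gnd M - {e}) \<noteq> rank M (gnd M)"
    using basis_iff_card_rank[OF assms] I by simp
  moreover have "rank M (gnd M - {e}) \<le> rank M (gnd M)" by (rule rank_mono[OF assms]) auto
  ultimately show "e \<in> gnd M \<and> rank M (gnd M - {e}) < rank M (gnd M)"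
    using e unfolding coloop_def by simp
next
  assume e: "e \<in> gnd M \<and> rank M (gnd M - {e}) < rank M (gnd M)"
  have "e \<in> B" if "basis M B" for B
  proof (rule ccontr)
    assume "e \<notin> B"
    have B: "indep M B" "card B = rank M (gnd M)" using that basis_iff_card_rank[OF assms] by auto
    then have "B \<subseteq> gnd M - {e}" using indep_subset_gnd[OF assms] \<open>e \<notin> B\<close> by blast
    then have "card B \<le> rank M (gnd M - {e})" by (rule rank_ge_card[OF assms B(1)])
    with e B show False by simp
  qed
  with e show "coloop M e" by (simp add: coloop_def)
qed

section \<open>Deletion and contraction\<close>

lemma gnd_delete [simp]: "gnd (delete M D) = gnd M - D"
  by (simp add: delete_def gnd_def)

lemma indep_delete [simp]: "indep (delete M D) I \<longleftrightarrow> indep M I \<and> I \<subseteq> gnd M - D"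
  by (simp add: delete_def indep_def gnd_def)

lemma gnd_contract [simp]: "gnd (contract M C) = gnd M - C"
  by (simp add: contract_def gnd_def)

lemma indep_contract [simp]:
  "indep (contract M C) I \<longleftrightarrow> I \<subseteq> gnd M - C \<and> rank M (I \<union> C) = card I + rank M C"
  by (simp add: contract_def indep_def gnd_def)

lemma matroid_eqI:
  assumes "gnd M1 = gnd M2" "\<And>I. indep M1 I = indep M2 I" shows "M1 = M2"
  using assms by (simp add: gnd_def indep_def prod_eq_iff fun_eq_iff)

lemma matroid_delete: assumes "matroid M" shows "matroid (delete M D)"
  unfolding matroid_def
proof (intro conjI allI impI)
  fix I J assume IJ: "indep (delete M D) I \<and> indep (delete M D) J \<and> card I < card J"
  then obtain e where "e \<in> J - I" "indep M (insert e I)"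
    using indep_augment[OF assms, of I J] by auto
  with IJ show "\<exists>e\<in>J - I. indep (delete M D) (insert e I)" by auto
qed (use matroid_finite_gnd[OF assms] indep_empty[OF assms] indep_subset[OF assms] in auto)

lemma rank_delete: assumes "matroid M" shows "rank (delete M D) X = rank M (X - D)"
proof -
  have "{card I | I. I \<subseteq> X \<and> indep (delete M D) I} = {card I | I. I \<subseteq> X - D \<and> indep M I}"
    using indep_subset_gnd[OF assms] by auto
  then show ?thesis by (simp add: rank_def)
qed

lemma indep_contract_finite: "matroid M \<Longrightarrow> indep (contract M C) I \<Longrightarrow> finite I"
  by (meson Diff_subset finite_subset indep_contract matroid_finite_gnd)

lemma indep_contract_subset:
  assumes "matroid M" "indep (contract M C) J" "I \<subseteq> J"
  shows "indep (contract M C) I"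
proof -
  have fJ: "finite J" using indep_contract_finite[OF assms(1,2)] .
  have "J \<union> C = (I \<union> C) \<union> (J - I)" using assms(3) by blast
  then have "rank M (J \<union> C) \<le> rank M (I \<union> C) + card (J - I)"
    using rank_Un_le[OF assms(1), of "J - I" "I \<union> C"] fJ by simp
  moreover have "card J = card I + card (J - I)"
    using card_Diff_subset[OF finite_subset[OF assms(3) fJ] assms(3)] card_mono[OF fJ assms(3)] by simp
  moreover have "rank M (C \<union> I) \<le> rank M C + card I"
    using rank_Un_le[OF assms(1)] finite_subset[OF assms(3) fJ] by blast
  moreover have "C \<union> I = I \<union> C" by blast
  ultimately show ?thesis using assms(2,3) by auto
qed

lemma matroid_contract: assumes "matroid M" shows "matroid (contract M C)"
  unfolding matroid_def
proof (intro conjI allI impI)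
  fix I J assume IJ: "indep (contract M C) I \<and> indep (contract M C) J \<and> card I < card J"
  show "\<exists>e\<in>J - I. indep (contract M C) (insert e I)"
  proof (rule ccontr)
    assume none: "\<not> ?thesis"
    have fI: "finite I" using indep_contract_finite[OF assms] IJ by blast
    have "rank M (insert e (I \<union> C)) = rank M (I \<union> C)" if e: "e \<in> J - I" for e
    proof -
      have "rank M (insert e I \<union> C) \<noteq> card (insert e I) + rank M C" using none e IJ by auto
      moreover have "card (insert e I) = card I + 1" using e fI by simp
      moreover have "rank M (insert e (I \<union> C)) \<le> rank M (I \<union> C) + 1" by (rule rank_insert_le[OF assms])
      moreover have "rank M (I \<union> C) \<le> rank M (insert e (I \<union> C))" by (rule rank_mono[OF assms]) auto
      ultimately show ?thesis using IJ by simp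
    qed
    moreover have "finite (J - I)" using indep_contract_finite[OF assms] IJ by blast
    ultimately have "rank M ((I \<union> C) \<union> (J - I)) = rank M (I \<union> C)"
      using rank_Un_eq_if_spanned[OF assms, of "J - I" "I \<union> C"] by simp
    moreover have "rank M (J \<union> C) \<le> rank M ((I \<union> C) \<union> (J - I))" by (rule rank_mono[OF assms]) auto
    ultimately show False using IJ by simp
  qed
next
  fix I J assume "indep (contract M C) J \<and> I \<subseteq> J"
  then show "indep (contract M C) I" using indep_contract_subset[OF assms] by blast
qed (use matroid_finite_gnd[OF assms] in auto)

lemma rank_contract:
  assumes "matroid M"
  shows "rank (contract M C) X = rank M (X \<inter> (gnd M - C) \<union> C) - rank M C"
proof (rule antisym)
  obtain I where I: "I \<subseteq> X" "indep (contract M C) I" "card I = rank (contract M C) X"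
    using obtain_rank_witness[OF matroid_contract[OF assms]] .
  have "rank M (I \<union> C) \<le> rank M (X \<inter> (gnd M - C) \<union> C)"
    using I by (intro rank_mono[OF assms]) auto
  with I show "rank (contract M C) X \<le> rank M (X \<inter> (gnd M - C) \<union> C) - rank M C" by simp
next
  obtain B where B: "B \<subseteq> C" "indep M B" "card B = rank M C"
    using obtain_rank_witness[OF assms] .
  have "B \<subseteq> X \<inter> (gnd M - C) \<union> C" using B(1) by blast
  then obtain J where J: "B \<subseteq> J" "J \<subseteq> X \<inter> (gnd M - C) \<union> C" "indep M J"
      "card J = rank M (X \<inter> (gnd M - C) \<union> C)"
    by (rule indep_extend_to_rank[OF assms B(2)])
  have fJ: "finite J" using indep_finite[OF assms J(3)] .
  have "card (J \<inter> C) \<le> card B"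
    using rank_ge_card[OF assms indep_subset[OF assms J(3)]] B(3) by simp
  then have JC: "J \<inter> C = B" using B(1) J(1) fJ card_subset_eq[of "J \<inter> C" B] card_mono[of "J \<inter> C" B]
    by (metis Int_greatest finite_Int le_antisym)
  have split: "J = (J - C) \<union> B" "(J - C) \<inter> B = {}" using JC B(1) by blast+
  then have cJ: "card J = card (J - C) + card B"
    using fJ card_Un_disjoint[of "J - C" B] by (metis finite_Un)
  have "rank M J \<le> rank M ((J - C) \<union> C)" using split(1) B(1) by (intro rank_mono[OF assms]) blast
  moreover have "rank M (C \<union> (J - C)) \<le> rank M C + card (J - C)" using fJ by (intro rank_Un_le[OF assms]) simp
  moreover have "C \<union> (J - C) = (J - C) \<union> C" by blast
  ultimately have "rank M ((J - C) \<union> C) = card (J - C) + rank M C"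
    using rank_indep[OF assms J(3)] cJ B(3) by simp
  moreover have "J - C \<subseteq> X" "J - C \<subseteq> gnd M - C" using J(2) by blast+
  ultimately have "card (J - C) \<le> rank (contract M C) X"
    by (intro rank_ge_card[OF matroid_contract[OF assms]]) auto
  with cJ J(4) B(3) show "rank M (X \<inter> (gnd M - C) \<union> C) - rank M C \<le> rank (contract M C) X"
    by simp
qed

lemma rank_delete_contract:
  assumes "matroid M"
  shows "rank (delete (contract M C) D) X = rank M ((X - D) \<inter> (gnd M - C) \<union> C) - rank M C"
  using rank_delete[OF matroid_contract[OF assms]] rank_contract[OF assms] by simp

lemma loop_delete_contract_iff:
  assumes "matroid M"
  shows "loop (delete (contract M C) D) y \<longleftrightarrow> y \<in> gnd M - C - D \<and> rank M (insert y C) = rank M C"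
proof -
  have "rank M (insert y C) \<le> rank M C + 1" by (rule rank_insert_le[OF assms])
  moreover have "rank M C \<le> rank M (insert y C)" by (rule rank_mono[OF assms]) auto
  ultimately show ?thesis unfolding loop_def by auto
qed

lemma coloop_delete_contract_iff:
  assumes "matroid M" "C \<subseteq> gnd M" "C \<inter> D = {}"
  shows "coloop (delete (contract M C) D) y \<longleftrightarrow>
    y \<in> gnd M - C - D \<and> rank M (gnd M - D - {y}) < rank M (gnd M - D)"
proof -
  let ?N = "delete (contract M C) D"
  have "matroid ?N" by (rule matroid_delete[OF matroid_contract[OF assms(1)]])
  then have "coloop ?N y \<longleftrightarrow> y \<in> gnd ?N \<and> rank ?N (gnd ?N - {y}) < rank ?N (gnd ?N)"
    by (rule coloop_iff_rank)
  moreover have "rank ?N (gnd ?N - {y}) = rank M (gnd M - D - {y}) - rank M C"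
    "rank ?N (gnd ?N) = rank M (gnd M - D) - rank M C"
    "rank M C \<le> rank M (gnd M - D - {y})" "rank M C \<le> rank M (gnd M - D)"
    if "y \<in> gnd M - C - D"
  proof -
    have "(gnd ?N - {y} - D) \<inter> (gnd M - C) \<union> C = gnd M - D - {y}"
      "(gnd ?N - D) \<inter> (gnd M - C) \<union> C = gnd M - D"
      using that assms(2,3) by auto
    then show "rank ?N (gnd ?N - {y}) = rank M (gnd M - D - {y}) - rank M C"
      "rank ?N (gnd ?N) = rank M (gnd M - D) - rank M C"
      by (simp_all only: rank_delete_contract[OF assms(1)])
    show "rank M C \<le> rank M (gnd M - D - {y})" "rank M C \<le> rank M (gnd M - D)"
      using that assms(2,3) by (auto intro!: rank_mono[OF assms(1)])
  qed
  ultimately show ?thesis by auto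
qed

definition loops_coloops :: "'a matroid \<Rightarrow> 'a set" where
  "loops_coloops N = {e. loop N e \<or> coloop N e}"

lemma finite_loops_coloops: "finite (gnd N) \<Longrightarrow> finite (loops_coloops N)"
  unfolding loops_coloops_def loop_def coloop_def by (auto intro: finite_subset)

lemma loops_coloops_delete_contract:
  assumes "matroid M" "C \<subseteq> gnd M" "C \<inter> D = {}"
  shows "loops_coloops (delete (contract M C) D) = {y \<in> gnd M - C - D.
    rank M (insert y C) = rank M C \<or> rank M (gnd M - D - {y}) < rank M (gnd M - D)}"
  unfolding loops_coloops_def loop_delete_contract_iff[OF assms(1)]
    coloop_delete_contract_iff[OF assms] by blast

section \<open>Minors in normal form\<close>

lemma delete_contract_delete_contract:
  assumes "matroid M" "C \<inter> D = {}" "X \<subseteq> gnd M - C - D"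
  shows "delete (contract (delete (contract M C) D) X) Y = delete (contract M (C \<union> X)) (D \<union> Y)"
proof (rule matroid_eqI)
  fix I
  let ?N = "delete (contract M C) D"
  show "indep (delete (contract ?N X) Y) I = indep (delete (contract M (C \<union> X)) (D \<union> Y)) I"
  proof (cases "I \<subseteq> gnd M - C - D - X - Y")
    case True
    have IX: "(I \<union> X - D) \<inter> (gnd M - C) \<union> C = I \<union> (C \<union> X)" "(X - D) \<inter> (gnd M - C) \<union> C = C \<union> X"
      using True assms(2,3) by blast+
    have "rank M C \<le> rank M (C \<union> X)" "rank M (C \<union> X) \<le> rank M (I \<union> (C \<union> X))"
      by (auto intro: rank_mono[OF assms(1)])
    then have "rank ?N (I \<union> X) = card I + rank ?N X \<longleftrightarrow>
        rank M (I \<union> (C \<union> X)) = card I + rank M (C \<union> X)"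
      unfolding rank_delete_contract[OF assms(1)] IX by linarith
    with True show ?thesis by auto
  qed auto
qed auto

lemma minor_delete_contract:
  "C \<subseteq> gnd M \<Longrightarrow> D \<subseteq> gnd M \<Longrightarrow> C \<inter> D = {} \<Longrightarrow> minor (delete (contract M C) D) M"
  unfolding minor_def by blast

lemma delete_contract_minor_delete_contract:
  assumes "matroid M" "C \<subseteq> gnd M" "D \<subseteq> gnd M" "C \<inter> D = {}" "C' \<subseteq> C" "D' \<subseteq> D"
  shows "minor (delete (contract M C) D) (delete (contract M C') D')"
proof -
  have "delete (contract (delete (contract M C') D') (C - C')) (D - D') =
      delete (contract M (C' \<union> (C - C'))) (D' \<union> (D - D'))"
    using assms by (intro delete_contract_delete_contract) auto
  also have "\<dots> = delete (contract M C) D"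
    using assms(5,6) by (simp add: Un_Diff_cancel Un_absorb1)
  finally show ?thesis
    unfolding minor_def using assms by (intro exI[of _ "C - C'"] exI[of _ "D - D'"]) auto
qed

lemma delete_contract_eq_contract_spanning:
  assumes "matroid M" "C' \<subseteq> C" "rank M C' = rank M C"
  shows "delete (contract M C) D = delete (contract M C') (D \<union> (C - C'))"
proof (rule matroid_eqI)
  fix I
  have "(I \<union> C') \<union> C = I \<union> C" using assms(2) by blast
  then have "rank M (I \<union> C) + rank M ((I \<union> C') \<inter> C) \<le> rank M (I \<union> C') + rank M C"
    using rank_submodular[OF assms(1), of "I \<union> C'" C] by simp
  moreover have "rank M C' \<le> rank M ((I \<union> C') \<inter> C)" "rank M (I \<union> C') \<le> rank M (I \<union> C)"
    using assms(2) by (auto intro: rank_mono[OF assms(1)])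
  ultimately have "rank M (I \<union> C) = rank M (I \<union> C')" using assms(3) by linarith
  then show "indep (delete (contract M C) D) I = indep (delete (contract M C') (D \<union> (C - C'))) I"
    using assms(2,3) by auto
qed (use assms(2) in auto)

lemma delete_contract_eq_contract_Un:
  assumes "Z \<subseteq> D" "\<And>I. I \<subseteq> gnd M - C - D \<Longrightarrow> rank M (I \<union> (C \<union> Z)) = rank M (I \<union> C) + card Z"
  shows "delete (contract M C) D = delete (contract M (C \<union> Z)) (D - Z)"
proof (rule matroid_eqI)
  fix I
  have "rank M (C \<union> Z) = rank M C + card Z" using assms(2)[of "{}"] by simp
  then show "indep (delete (contract M C) D) I = indep (delete (contract M (C \<union> Z)) (D - Z)) I"
    using assms by (cases "I \<subseteq> gnd M - C - D") auto
qed (use assms(1) in auto)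

lemma minor_indep_contract:
  assumes "matroid M" "minor N M"
  obtains C D where "C \<subseteq> gnd M" "D \<subseteq> gnd M" "C \<inter> D = {}" "indep M C"
    "N = delete (contract M C) D"
proof -
  obtain C D where CD: "C \<subseteq> gnd M" "D \<subseteq> gnd M" "C \<inter> D = {}" "N = delete (contract M C) D"
    using assms(2) unfolding minor_def by blast
  obtain B where B: "B \<subseteq> C" "indep M B" "card B = rank M C"
    using obtain_rank_witness[OF assms(1)] .
  have "rank M B = rank M C" using rank_indep[OF assms(1) B(2)] B(3) by simp
  then have "N = delete (contract M B) (D \<union> (C - B))"
    using delete_contract_eq_contract_spanning[OF assms(1) B(1)] CD(4) by simp
  moreover have "B \<subseteq> gnd M" "D \<union> (C - B) \<subseteq> gnd M" "B \<inter> (D \<union> (C - B)) = {}"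
    using B(1) CD(1-3) by blast+
  ultimately show thesis using that B(2) by blast
qed

definition coindep :: "'a matroid \<Rightarrow> 'a set \<Rightarrow> bool" where
  "coindep M D \<longleftrightarrow> rank M (gnd M - D) = rank M (gnd M)"

lemma coindep_subset: "matroid M \<Longrightarrow> coindep M D \<Longrightarrow> D' \<subseteq> D \<Longrightarrow> coindep M D'"
  unfolding coindep_def by (metis Diff_mono order_refl rank_mono rank_le_rank_gnd le_antisym)

lemma rank_Un_basis_Diff:
  assumes "matroid M" "indep M B" "card B = rank M (gnd M)" "card (B \<inter> A) = rank M A" "X \<subseteq> A"
  shows "rank M (X \<union> (B - A)) = rank M X + card (B - A)"
proof -
  have fB: "finite B" using indep_finite[OF assms(1,2)] .
  have "(X \<union> (B - A)) \<inter> A = X" using assms(5) by blast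
  then have "rank M ((X \<union> (B - A)) \<union> A) + rank M X \<le> rank M (X \<union> (B - A)) + rank M A"
    using rank_submodular[OF assms(1), of "X \<union> (B - A)" A] by simp
  moreover have "card B \<le> rank M ((X \<union> (B - A)) \<union> A)"
    by (rule rank_ge_card[OF assms(1,2)]) blast
  moreover have "card B = card (B \<inter> A) + card (B - A)" using card_Int_Diff[OF fB] .
  moreover have "rank M (X \<union> (B - A)) \<le> rank M X + card (B - A)"
    using rank_Un_le[OF assms(1)] fB by simp
  ultimately show ?thesis using assms(4) by linarith
qed

lemma delete_contract_coindep:
  assumes "matroid M" "C \<inter> D = {}" "indep M C"
  obtains Z where "Z \<subseteq> D" "indep M (C \<union> Z)" "coindep M (D - Z)"
    "delete (contract M C) D = delete (contract M (C \<union> Z)) (D - Z)"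
proof -
  define A where "A = gnd M - D"
  have "C \<subseteq> A" using indep_subset_gnd[OF assms(1,3)] assms(2) unfolding A_def by blast
  then obtain BA where BA: "C \<subseteq> BA" "BA \<subseteq> A" "indep M BA" "card BA = rank M A"
    by (rule indep_extend_to_rank[OF assms(1,3)])
  obtain B where B: "BA \<subseteq> B" "B \<subseteq> gnd M" "indep M B" "card B = rank M (gnd M)"
    using indep_extend_to_rank[OF assms(1) BA(3) indep_subset_gnd[OF assms(1) BA(3)]] .
  have "card (B \<inter> A) \<le> rank M A"
    by (rule rank_ge_card[OF assms(1) indep_subset[OF assms(1) B(3)]]) auto
  moreover have "card BA \<le> card (B \<inter> A)"
    using BA(2) B(1) indep_finite[OF assms(1) B(3)] by (intro card_mono) auto
  ultimately have basis_A: "card (B \<inter> A) = rank M A" using BA(4) by simp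
  define Z where "Z = B - A"
  have Z: "Z \<subseteq> D" "B \<subseteq> gnd M - (D - Z)" using B(2) unfolding Z_def A_def by blast+
  have "rank M (I \<union> (C \<union> Z)) = rank M (I \<union> C) + card Z" if "I \<subseteq> gnd M - C - D" for I
    using rank_Un_basis_Diff[OF assms(1) B(3,4) basis_A, of "I \<union> C"] that \<open>C \<subseteq> A\<close>
    unfolding Z_def A_def by (simp add: Un_assoc) blast
  then have "delete (contract M C) D = delete (contract M (C \<union> Z)) (D - Z)"
    by (rule delete_contract_eq_contract_Un[OF Z(1)])
  moreover have "indep M (C \<union> Z)"
    using BA(1) B(1) by (intro indep_subset[OF assms(1) B(3)]) (auto simp: Z_def)
  moreover have "coindep M (D - Z)"
    using rank_ge_card[OF assms(1) B(3) Z(2)] B(4) rank_le_rank_gnd[OF assms(1), of "gnd M - (D - Z)"]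
    unfolding coindep_def by simp
  ultimately show thesis using that Z(1) by blast
qed

lemma minor_normal_form:
  assumes "matroid M" "minor N M"
  obtains C D where "C \<subseteq> gnd M" "D \<subseteq> gnd M" "C \<inter> D = {}" "indep M C" "coindep M D"
    "N = delete (contract M C) D"
proof -
  obtain C D where CD: "C \<subseteq> gnd M" "D \<subseteq> gnd M" "C \<inter> D = {}" "indep M C"
      "N = delete (contract M C) D"
    using minor_indep_contract[OF assms] .
  obtain Z where Z: "Z \<subseteq> D" "indep M (C \<union> Z)" "coindep M (D - Z)"
      "delete (contract M C) D = delete (contract M (C \<union> Z)) (D - Z)"
    using delete_contract_coindep[OF assms(1) CD(3,4)] .
  have "C \<union> Z \<subseteq> gnd M" "D - Z \<subseteq> gnd M" "(C \<union> Z) \<inter> (D - Z) = {}" using CD Z(1) by blast+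
  with Z CD(5) show thesis by (intro that[of "C \<union> Z" "D - Z"]) simp_all
qed

section \<open>Removing loops and coloops\<close>

lemma circuit_rank_Diff:
  assumes "matroid M" "circuit M K" "e \<in> K"
  shows "rank M (K - {e}) = rank M K"
proof -
  have K: "K \<subseteq> gnd M" "\<not> indep M K" "indep M (K - {e})"
    using assms(2,3) unfolding circuit_def by blast+
  have fK: "finite K" using finite_subset[OF K(1) matroid_finite_gnd[OF assms(1)]] .
  have "rank M K \<noteq> card K" using indep_if_rank_eq_card[OF assms(1) fK] K(2) by blast
  moreover have "rank M K \<le> card K" by (rule rank_le_card[OF assms(1) fK])
  moreover have "rank M (K - {e}) = card K - 1" using rank_indep[OF assms(1) K(3)] assms(3) fK by simp
  moreover have "rank M (K - {e}) \<le> rank M K" by (rule rank_mono[OF assms(1)]) auto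
  ultimately show ?thesis by linarith
qed

lemma connected_no_loop_coloop:
  assumes "matroid M" "connected_matroid M" "card (gnd M) \<ge> 2"
  shows "\<not> loop M e" "\<not> coloop M e"
proof -
  have "\<not> loop M e \<and> \<not> coloop M e"
  proof (cases "e \<in> gnd M")
    case True
    have "card (gnd M - {e}) \<ge> 1" using assms(3) True matroid_finite_gnd[OF assms(1)] by simp
    then have "gnd M - {e} \<noteq> {}" by (metis card.empty not_one_le_zero)
    then obtain f where f: "f \<in> gnd M" "f \<noteq> e" by blast
    then obtain K where K: "circuit M K" "e \<in> K" "f \<in> K"
      using assms(2) True unfolding connected_matroid_def by blast
    have "{e} \<subset> K" using K(2,3) f(2) by blast
    then have "indep M {e}" using K(1) unfolding circuit_def by blast
    moreover have "K \<subseteq> gnd M" using K(1) unfolding circuit_def by blast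
    then have "rank M (gnd M - {e}) = rank M (gnd M)"
      by (rule rank_Diff_eq_mono[OF assms(1) K(2) _ circuit_rank_Diff[OF assms(1) K(1,2)]])
    ultimately show ?thesis unfolding loop_def coloop_iff_rank[OF assms(1)] by simp
  qed (simp add: loop_def coloop_def)
  then show "\<not> loop M e" "\<not> coloop M e" by blast+
qed

lemma indep_exchange_spanned:
  assumes M: "matroid M" and C: "indep M C" and e: "e \<notin> C" "indep M {e}"
    and span: "rank M (insert e C) = rank M C"
  obtains x where "x \<in> C" "rank M (insert e (C - {x})) = rank M C"
proof -
  let ?spans = "\<lambda>B. B \<subseteq> C \<and> rank M (insert e B) = rank M B"
  \<comment> \<open>a smallest such \<open>C0\<close> makes \<open>insert e C0\<close> the fundamental circuit of \<open>e\<close> in \<open>C\<close>\<close>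
  obtain C0 where C0: "?spans C0" and least: "\<And>B. ?spans B \<Longrightarrow> card C0 \<le> card B"
    using ex_has_least_nat[of ?spans C card] span by blast
  have fC: "finite C" using indep_finite[OF M C] .
  have fC0: "finite C0" using C0 finite_subset[OF _ fC] by blast
  have iC0: "indep M C0" using C0 indep_subset[OF M C] by blast
  have "C0 \<noteq> {}" using C0 rank_indep[OF M e(2)] rank_empty[OF M] by auto
  then obtain x where x: "x \<in> C0" by blast
  have xC: "x \<in> C" using x C0 by blast
  have "card (C0 - {x}) < card C0" using fC0 x by (rule card_Diff1_less)
  then have minimal: "rank M (insert e (C0 - {x})) \<noteq> rank M (C0 - {x})"
    using least[of "C0 - {x}"] C0 by auto
  have ranks: "rank M C = card C" "rank M C0 = card C0"
    "rank M (C - {x}) = card C - 1" "rank M (C0 - {x}) = card C0 - 1"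
    using rank_indep[OF M] C iC0 indep_subset[OF M C, of "C - {x}"] indep_subset[OF M iC0, of "C0 - {x}"]
      x xC fC fC0 by auto
  have cards: "card C \<ge> 1" "card C0 \<ge> 1"
    using card_mono[OF fC, of "{x}"] card_mono[OF fC0, of "{x}"] xC x by auto
  have not_spanned: "rank M (insert e (C - {x})) \<noteq> rank M (C - {x})"
  proof
    assume spanned: "rank M (insert e (C - {x})) = rank M (C - {x})"
    have "insert e C0 \<union> insert e (C - {x}) = insert e C"
      "insert e C0 \<inter> insert e (C - {x}) = insert e (C0 - {x})"
      using x C0 e(1) by blast+
    then have "rank M (insert e C) + rank M (insert e (C0 - {x}))
        \<le> rank M (insert e C0) + rank M (insert e (C - {x}))"
      using rank_submodular[OF M, of "insert e C0" "insert e (C - {x})"] by simp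
    moreover have "rank M (C0 - {x}) \<le> rank M (insert e (C0 - {x}))" by (rule rank_mono[OF M]) auto
    ultimately show False using minimal spanned span C0 ranks cards by linarith
  qed
  have "rank M (insert e (C - {x})) \<le> rank M (C - {x}) + 1" by (rule rank_insert_le[OF M])
  moreover have "rank M (C - {x}) \<le> rank M (insert e (C - {x}))" by (rule rank_mono[OF M]) auto
  ultimately show thesis using that xC not_spanned ranks cards by simp
qed

lemma uncontract_removes_loop:
  assumes M: "matroid M" "\<And>e. \<not> loop M e"
    and C: "C \<subseteq> gnd M" "indep M C" "C \<inter> D = {}"
    and e: "loop (delete (contract M C) D) e"
  obtains x where "x \<in> C"
    "loops_coloops (delete (contract M (C - {x})) D) \<subseteq> loops_coloops (delete (contract M C) D) - {e}"
proof -
  have e_in: "e \<in> gnd M - C - D" and span: "rank M (insert e C) = rank M C"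
    using e loop_delete_contract_iff[OF M(1)] by auto
  have "e \<notin> C" "indep M {e}" using e_in M(2)[of e] unfolding loop_def by blast+
  then obtain x where xC: "x \<in> C" and exch: "rank M (insert e (C - {x})) = rank M C"
    using indep_exchange_spanned[OF M(1) C(2) _ _ span] by blast
  have "indep M (C - {x})" by (rule indep_subset[OF M(1) C(2)]) blast
  then have "rank M (C - {x}) < rank M C"
    using rank_indep[OF M(1) C(2)] rank_indep[OF M(1)] card_Diff1_less[OF indep_finite[OF M(1) C(2)] xC]
    by simp
  moreover have ins: "insert x (C - {x}) = C" "insert e C - {e} = C" "insert e C - {x} = insert e (C - {x})"
    using xC e_in by auto
  ultimately have x_not_loop: "rank M (insert x (C - {x})) \<noteq> rank M (C - {x})"
    and e_not_loop: "rank M (insert e (C - {x})) \<noteq> rank M (C - {x})"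
    using exch by simp_all
  have sub: "insert e C \<subseteq> gnd M - D" using e_in C(1,3) by blast
  have x_not_coloop: "rank M (gnd M - D - {x}) = rank M (gnd M - D)"
    by (rule rank_Diff_eq_mono[OF M(1) _ sub]) (use xC ins exch span in auto)
  have e_not_coloop: "rank M (gnd M - D - {e}) = rank M (gnd M - D)"
    by (rule rank_Diff_eq_mono[OF M(1) _ sub]) (use ins span in auto)
  have "loops_coloops (delete (contract M (C - {x})) D) \<subseteq> loops_coloops (delete (contract M C) D) - {e}"
  proof
    fix y assume "y \<in> loops_coloops (delete (contract M (C - {x})) D)"
    then have y: "y \<in> gnd M - (C - {x}) - D"
      "rank M (insert y (C - {x})) = rank M (C - {x}) \<or> rank M (gnd M - D - {y}) < rank M (gnd M - D)"
      using loops_coloops_delete_contract[OF M(1), of "C - {x}" D] C by auto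
    have "y \<noteq> x" using y(2) x_not_loop x_not_coloop by auto
    moreover have "y \<noteq> e" using y(2) e_not_loop e_not_coloop by auto
    moreover have "rank M (insert y C) = rank M C \<or> rank M (gnd M - D - {y}) < rank M (gnd M - D)"
      using y(2) rank_insert_eq_mono[OF M(1), of y "C - {x}" C] by blast
    ultimately show "y \<in> loops_coloops (delete (contract M C) D) - {e}"
      using y(1) loops_coloops_delete_contract[OF M(1) C(1,3)] by auto
  qed
  with xC show thesis by (rule that)
qed

lemma coindep_exchange:
  assumes M: "matroid M" "\<not> coloop M e"
    and D: "D \<subseteq> gnd M" "coindep M D" "e \<in> gnd M - D"
    and drop: "rank M (gnd M - D - {e}) < rank M (gnd M - D)"
  obtains x where "x \<in> D" "rank M (insert x (gnd M - D - {e})) = rank M (gnd M)"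
proof -
  let ?S = "gnd M - D - {e}"
  have "insert e ?S = gnd M - D" using D(3) by blast
  then have rank_S: "rank M ?S + 1 = rank M (gnd M)"
    using drop rank_insert_le[OF M(1), of e ?S] D(2) unfolding coindep_def by simp
  have "\<exists>x\<in>D. rank M (insert x ?S) \<noteq> rank M ?S"
  proof (rule ccontr)
    assume "\<not> ?thesis"
    then have "rank M (?S \<union> D) = rank M ?S"
      using rank_Un_eq_if_spanned[OF M(1) finite_subset[OF D(1) matroid_finite_gnd[OF M(1)]]] by blast
    moreover have "?S \<union> D = gnd M - {e}" using D(1,3) by blast
    moreover have "rank M (gnd M - {e}) = rank M (gnd M)"
      using M(2) coloop_iff_rank[OF M(1)] rank_mono[OF M(1), of "gnd M - {e}" "gnd M"] D(3)
      by fastforce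
    ultimately show False using rank_S by simp
  qed
  then obtain x where x: "x \<in> D" "rank M (insert x ?S) \<noteq> rank M ?S" by blast
  have "rank M (insert x ?S) = rank M (gnd M)"
    using x(2) rank_S rank_mono[OF M(1), of ?S "insert x ?S"]
      rank_le_rank_gnd[OF M(1), of "insert x ?S"] by force
  with x(1) show thesis by (rule that)
qed

lemma rank_Diff_lt_antimono:
  assumes "matroid M" "x \<in> A" "A \<subseteq> B" "rank M (B - {x}) < rank M B"
  shows "rank M (A - {x}) < rank M A"
  using rank_Diff_eq_mono[OF assms(1-3)] rank_mono[OF assms(1), of "A - {x}" A] assms(4)
  by fastforce

lemma undelete_removes_coloop:
  assumes M: "matroid M" "\<And>e. \<not> coloop M e"
    and CD: "C \<subseteq> gnd M" "D \<subseteq> gnd M" "C \<inter> D = {}" "coindep M D"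
    and e: "coloop (delete (contract M C) D) e" "\<not> loop (delete (contract M C) D) e"
  obtains x where "x \<in> D" "coindep M (D - {x})"
    "loops_coloops (delete (contract M C) (D - {x})) \<subseteq> loops_coloops (delete (contract M C) D) - {e}"
proof -
  have e_in: "e \<in> gnd M - C - D" and e_not_loop: "rank M (insert e C) \<noteq> rank M C"
    and drop: "rank M (gnd M - D - {e}) < rank M (gnd M - D)"
    using e coloop_delete_contract_iff[OF M(1) CD(1,3)] loop_delete_contract_iff[OF M(1)] by auto
  obtain x where xD: "x \<in> D" and x_full: "rank M (insert x (gnd M - D - {e})) = rank M (gnd M)"
    using coindep_exchange[OF M(1,2) CD(2,4) _ drop] e_in by blast
  have cD: "coindep M (D - {x})" by (rule coindep_subset[OF M(1) CD(4)]) blast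
  have "C \<subseteq> gnd M - D - {e}" using CD(1,3) e_in by blast
  moreover have "rank M (gnd M - D - {e}) < rank M (gnd M)" using drop CD(4) unfolding coindep_def by simp
  ultimately have x_not_loop: "rank M (insert x C) \<noteq> rank M C"
    using x_full rank_insert_eq_mono[OF M(1)] by fastforce
  have "gnd M - (D - {x}) - {x} = gnd M - D" "gnd M - (D - {x}) - {e} = insert x (gnd M - D - {e})"
    using xD CD(2) e_in by blast+
  then have x_not_coloop: "\<not> rank M (gnd M - (D - {x}) - {x}) < rank M (gnd M - (D - {x}))"
    and e_not_coloop: "\<not> rank M (gnd M - (D - {x}) - {e}) < rank M (gnd M - (D - {x}))"
    using CD(4) cD x_full unfolding coindep_def by simp_all
  have "loops_coloops (delete (contract M C) (D - {x})) \<subseteq> loops_coloops (delete (contract M C) D) - {e}"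
  proof
    fix y assume "y \<in> loops_coloops (delete (contract M C) (D - {x}))"
    then have y: "y \<in> gnd M - C - (D - {x})" "rank M (insert y C) = rank M C \<or>
        rank M (gnd M - (D - {x}) - {y}) < rank M (gnd M - (D - {x}))"
      using loops_coloops_delete_contract[OF M(1) CD(1), of "D - {x}"] CD(3) by auto
    have "y \<noteq> x" using y(2) x_not_loop x_not_coloop by auto
    moreover have "y \<noteq> e" using y(2) e_not_loop e_not_coloop by auto
    moreover have "rank M (gnd M - D - {y}) < rank M (gnd M - D)"
      if "rank M (gnd M - (D - {x}) - {y}) < rank M (gnd M - (D - {x}))"
      by (rule rank_Diff_lt_antimono[OF M(1) _ _ that]) (use y(1) \<open>y \<noteq> x\<close> in auto)
    ultimately show "y \<in> loops_coloops (delete (contract M C) D) - {e}"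
      using y loops_coloops_delete_contract[OF M(1) CD(1,3)] by auto
  qed
  with xD cD show thesis by (rule that)
qed

lemma loops_coloops_decrease:
  assumes M: "matroid M" "\<And>e. \<not> loop M e" "\<And>e. \<not> coloop M e"
    and CD: "C \<subseteq> gnd M" "D \<subseteq> gnd M" "C \<inter> D = {}" "indep M C" "coindep M D"
    and e: "e \<in> loops_coloops (delete (contract M C) D)"
  obtains C' D' where "C' \<subseteq> C" "D' \<subseteq> D" "card (C - C') + card (D - D') = 1"
    "indep M C'" "coindep M D'"
    "loops_coloops (delete (contract M C') D') \<subseteq> loops_coloops (delete (contract M C) D) - {e}"
proof -
  consider "loop (delete (contract M C) D) e"
    | "coloop (delete (contract M C) D) e" "\<not> loop (delete (contract M C) D) e"
    using e unfolding loops_coloops_def by blast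
  then show thesis
  proof cases
    case 1
    obtain x where "x \<in> C"
      "loops_coloops (delete (contract M (C - {x})) D) \<subseteq> loops_coloops (delete (contract M C) D) - {e}"
      using uncontract_removes_loop[OF M(1,2) CD(1,4,3) 1] .
    moreover have "C - (C - {x}) = {x}" using \<open>x \<in> C\<close> by blast
    ultimately show thesis
      using that[of "C - {x}" D] indep_subset[OF M(1) CD(4), of "C - {x}"] CD(5) by auto
  next
    case 2
    obtain x where "x \<in> D" "coindep M (D - {x})"
      "loops_coloops (delete (contract M C) (D - {x})) \<subseteq> loops_coloops (delete (contract M C) D) - {e}"
      using undelete_removes_coloop[OF M(1,3) CD(1,2,3,5) 2] .
    moreover have "D - (D - {x}) = {x}" using \<open>x \<in> D\<close> by blast
    ultimately show thesis using that[of C "D - {x}"] CD(4) by auto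
  qed
qed

lemma remove_loops_coloops:
  assumes M: "matroid M" "\<And>e. \<not> loop M e" "\<And>e. \<not> coloop M e"
    and "C \<subseteq> gnd M" "D \<subseteq> gnd M" "C \<inter> D = {}" "indep M C" "coindep M D"
  shows "\<exists>X\<subseteq>C. \<exists>Y\<subseteq>D. loops_coloops (delete (contract M (C - X)) (D - Y)) = {} \<and>
    card X + card Y \<le> card (loops_coloops (delete (contract M C) D))"
  using assms(4-8)
proof (induction "card (loops_coloops (delete (contract M C) D))" arbitrary: C D rule: less_induct)
  case less
  let ?L = "loops_coloops (delete (contract M C) D)"
  show ?case
  proof (cases "?L = {}")
    case False
    then obtain e where e: "e \<in> ?L" by blast
    obtain C' D' where CD': "C' \<subseteq> C" "D' \<subseteq> D" "card (C - C') + card (D - D') = 1"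
        "indep M C'" "coindep M D'" "loops_coloops (delete (contract M C') D') \<subseteq> ?L - {e}"
      using loops_coloops_decrease[OF M less.prems e] .
    have "finite ?L" by (rule finite_loops_coloops) (simp add: matroid_finite_gnd[OF M(1)])
    then have smaller: "card (loops_coloops (delete (contract M C') D')) + 1 \<le> card ?L"
      using CD'(6) e card_mono[OF _ CD'(6)] card_Diff1_less[of ?L e] by fastforce
    have "C' \<subseteq> gnd M" "D' \<subseteq> gnd M" "C' \<inter> D' = {}" using CD'(1,2) less.prems(1-3) by blast+
    then obtain X Y where XY: "X \<subseteq> C'" "Y \<subseteq> D'"
        "loops_coloops (delete (contract M (C' - X)) (D' - Y)) = {}"
        "card X + card Y \<le> card (loops_coloops (delete (contract M C') D'))"
      using less.hyps[of C' D'] smaller CD'(4,5) by fastforce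
    have "C - ((C - C') \<union> X) = C' - X" "D - ((D - D') \<union> Y) = D' - Y"
      "(C - C') \<union> X \<subseteq> C" "(D - D') \<union> Y \<subseteq> D"
      using CD'(1,2) XY(1,2) by blast+
    moreover have "card ((C - C') \<union> X) + card ((D - D') \<union> Y) \<le> card ?L"
      using card_Un_le[of "C - C'" X] card_Un_le[of "D - D'" Y] XY(4) CD'(3) smaller by linarith
    ultimately show ?thesis using XY(3) by (metis (no_types, lifting))
  qed (rule exI[of _ "{}"], simp, rule exI[of _ "{}"], simp)
qed

lemma card_gnd_delete_contract_le:
  assumes "matroid M" "C \<subseteq> gnd M" "D \<subseteq> gnd M" "X \<subseteq> C" "Y \<subseteq> D"
  shows "card (gnd (delete (contract M (C - X)) (D - Y)))
    \<le> card (gnd (delete (contract M C) D)) + card X + card Y"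
proof -
  let ?E = "gnd (delete (contract M C) D)"
  have "gnd (delete (contract M (C - X)) (D - Y)) \<subseteq> ?E \<union> X \<union> Y" by auto
  moreover have "?E \<union> X \<union> Y \<subseteq> gnd M" using assms(2-5) by auto
  then have "finite (?E \<union> X \<union> Y)" using matroid_finite_gnd[OF assms(1)] by (rule finite_subset)
  ultimately have "card (gnd (delete (contract M (C - X)) (D - Y))) \<le> card (?E \<union> X \<union> Y)"
    by (rule card_mono[rotated])
  also have "\<dots> \<le> card ?E + card X + card Y" using card_Un_le order_trans add_right_mono by metis
  finally show ?thesis .
qed

theorem lemma2p11:
  fixes M N :: "'a matroid" and l :: nat
  assumes "matroid M"
    and "connected_matroid M"
    and "card (gnd M) \<ge> 2"
    and "minor N M"
    and "l = card {e. loop N e \<or> coloop N e}"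
  shows "\<exists>N'. minor N' M \<and> minor N N' \<and>
               (\<forall>e. \<not> loop N' e \<and> \<not> coloop N' e) \<and>
               card (gnd N') \<le> card (gnd N) + l"
proof -
  obtain C D where CD: "C \<subseteq> gnd M" "D \<subseteq> gnd M" "C \<inter> D = {}" "indep M C" "coindep M D"
      and N: "N = delete (contract M C) D"
    using minor_normal_form[OF assms(1,4)] .
  have l: "l = card (loops_coloops N)" using assms(5) unfolding loops_coloops_def .
  obtain X Y where XY: "X \<subseteq> C" "Y \<subseteq> D"
      "loops_coloops (delete (contract M (C - X)) (D - Y)) = {}" "card X + card Y \<le> l"
    using remove_loops_coloops[OF assms(1) connected_no_loop_coloop[OF assms(1-3)] CD] N l by blast
  let ?N' = "delete (contract M (C - X)) (D - Y)"
  have "minor ?N' M" by (rule minor_delete_contract) (use CD in blast)+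
  moreover have "minor N ?N'"
    unfolding N by (rule delete_contract_minor_delete_contract[OF assms(1) CD(1-3)]) blast+
  moreover have "\<forall>e. \<not> loop ?N' e \<and> \<not> coloop ?N' e" using XY(3) unfolding loops_coloops_def by blast
  moreover have "card (gnd ?N') \<le> card (gnd N) + l"
    using card_gnd_delete_contract_le[OF assms(1) CD(1,2) XY(1,2)] XY(4) N by simp
  ultimately show ?thesis by blast
qed

end
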